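(* Let $(a_n)_{n\ge0}$ be a sequence of real numbers such that for every $C_1>1$ there exists $C_0\ge0$ such that for every $q\ge2$ and all integers $m_1,\dots,m_q\ge0$, $$a_{m_1+\cdots+m_q}\le C_1\sum_{i=1}^q a_{m_i}+qC_0.$$ Then $\liminf_{n\to+\infty}\frac1n a_n=\limsup_{n\to+\infty}\frac1n a_n$. *)

theory Defs
  imports "HOL-Analysis.Analysis"
begin

end

theory Submission
  imports Defs
begin

text \<open>
  Cutting \<open>n = kN + r\<close> into \<open>k\<close> blocks of length \<open>N\<close> and one
  block of length \<open>r < N\<close> gives \<open>a\<^sub>n \<le> C\<^sub>1 (k a\<^sub>N + a\<^sub>r) + (k + 1) C\<^sub>0\<close>, hence
  \<open>limsup a\<^sub>n/n \<le> (C\<^sub>1 a\<^sub>N + C\<^sub>0)/N\<close> for every \<open>N\<close>. Taking the liminf over \<open>N\<close>, where \<open>C\<^sub>0/N\<close>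
  vanishes, yields \<open>limsup a\<^sub>n/n \<le> C\<^sub>1 liminf a\<^sub>n/n\<close>, and \<open>C\<^sub>1 \<rightarrow> 1\<close> finishes the proof.
\<close>

definition quasi_subadditive :: "real \<Rightarrow> real \<Rightarrow> (nat \<Rightarrow> real) \<Rightarrow> bool" where
  "quasi_subadditive C1 C0 a \<longleftrightarrow>
     (\<forall>q m. q \<ge> 2 \<longrightarrow> a (\<Sum>i=1..q. m i) \<le> C1 * (\<Sum>i=1..q. a (m i)) + real q * C0)"

lemma quasi_subadditive_div_mod:
  assumes "quasi_subadditive C1 C0 a" and "0 < N" and "N \<le> n"
  shows "a n \<le> C1 * (real (n div N) * a N + a (n mod N)) + real (n div N + 1) * C0"
proof -
  define k where "k = n div N"
  have "k \<ge> 1"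
    using div_le_mono[OF assms(3), of N] assms(2) by (simp add: k_def)
  define m where "m i = (if i \<le> k then N else n mod N)" for i
  have "(\<Sum>i=1..Suc k. m i) = (\<Sum>i=1..k. N) + n mod N"
    by (simp add: m_def)
  also have "\<dots> = n"
    by (simp add: k_def)
  finally have sum_m: "(\<Sum>i=1..Suc k. m i) = n" .
  have "(\<Sum>i=1..Suc k. a (m i)) = (\<Sum>i=1..k. a N) + a (n mod N)"
    by (simp add: m_def)
  then have sum_am: "(\<Sum>i=1..Suc k. a (m i)) = real k * a N + a (n mod N)"
    by simp
  have "Suc k \<ge> 2"
    using \<open>k \<ge> 1\<close> by simp
  then have "a (\<Sum>i=1..Suc k. m i) \<le> C1 * (\<Sum>i=1..Suc k. a (m i)) + real (Suc k) * C0"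
    using assms(1) unfolding quasi_subadditive_def by blast
  then show ?thesis
    unfolding sum_m sum_am by (simp add: k_def)
qed

lemma tendsto_periodic_over_n:
  fixes g :: "nat \<Rightarrow> real"
  assumes "0 < N"
  shows "(\<lambda>n. g (n mod N) / real n) \<longlonglongrightarrow> 0"
proof (rule Lim_null_comparison)
  define B where "B = (\<Sum>r<N. \<bar>g r\<bar>)"
  have "\<bar>g (n mod N)\<bar> \<le> B" for n
    unfolding B_def by (rule member_le_sum) (use assms in auto)
  then show "\<forall>\<^sub>F n in sequentially. norm (g (n mod N) / real n) \<le> B / real n"
    by (auto simp: divide_right_mono)
  show "(\<lambda>n. B / real n) \<longlonglongrightarrow> 0"
    by (rule lim_const_over_n)
qed

lemma limsup_le_quasi_subadditive_bound:
  assumes "quasi_subadditive C1 C0 a" and "0 < N"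
  shows "limsup (\<lambda>n. ereal (a n / real n)) \<le> ereal ((C1 * a N + C0) / real N)"
proof -
  define c where "c = (C1 * a N + C0) / real N"
  define h where "h r = C1 * (a r - real r * a N / real N) + C0 * (1 - real r / real N)" for r
  have bound: "a n / real n \<le> c + h (n mod N) / real n" if "N \<le> n" for n
  proof -
    have n_eq: "real n = real (n div N) * real N + real (n mod N)"
      by (metis div_mult_mod_eq of_nat_add of_nat_mult)
    have "a n \<le> C1 * (real (n div N) * a N + a (n mod N)) + real (n div N + 1) * C0"
      using quasi_subadditive_div_mod[OF assms that] .
    also have "\<dots> = real n * c + h (n mod N)"
      using \<open>0 < N\<close> by (simp add: n_eq c_def h_def field_simps)
    finally show ?thesis
      using \<open>0 < N\<close> that by (simp add: divide_simps mult.commute)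
  qed
  have "(\<lambda>n. c + h (n mod N) / real n) \<longlonglongrightarrow> c + 0"
    by (intro tendsto_add tendsto_const tendsto_periodic_over_n \<open>0 < N\<close>)
  then have "limsup (\<lambda>n. ereal (c + h (n mod N) / real n)) = ereal c"
    by (simp add: lim_imp_Limsup)
  moreover have "limsup (\<lambda>n. ereal (a n / real n))
      \<le> limsup (\<lambda>n. ereal (c + h (n mod N) / real n))"
    by (rule Limsup_mono) (use bound in \<open>auto simp: eventually_sequentially\<close>)
  ultimately show ?thesis
    by (simp add: c_def)
qed

lemma limsup_le_mult_liminf:
  assumes "quasi_subadditive C1 C0 a" and "0 \<le> C1"
  defines "X \<equiv> \<lambda>n. ereal (a n / real n)"
  shows "limsup X \<le> ereal C1 * liminf X"
proof -
  have "\<forall>\<^sub>F N in sequentially. limsup X \<le> ereal (C0 / real N) + ereal C1 * X N"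
  proof (rule eventually_sequentiallyI[of 1])
    fix N :: nat assume "1 \<le> N"
    then have "limsup X \<le> ereal ((C1 * a N + C0) / real N)"
      unfolding X_def by (intro limsup_le_quasi_subadditive_bound assms(1)) simp
    then show "limsup X \<le> ereal (C0 / real N) + ereal C1 * X N"
      by (simp add: X_def add_divide_distrib add.commute)
  qed
  then have "limsup X \<le> liminf (\<lambda>N. ereal (C0 / real N) + ereal C1 * X N)"
    by (rule Liminf_bounded)
  also have "\<dots> = 0 + liminf (\<lambda>N. ereal C1 * X N)"
    using tendsto_ereal[OF lim_const_over_n[of C0]] by (intro ereal_liminf_lim_add) (simp_all add: zero_ereal_def)
  also have "\<dots> = ereal C1 * liminf X"
    using \<open>0 \<le> C1\<close> by (simp add: Liminf_ereal_mult_left)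
  finally show ?thesis .
qed

theorem lemma7:
  fixes a :: "nat \<Rightarrow> real"
  assumes "\<forall>C1::real. C1 > 1 \<longrightarrow> (\<exists>C0::real. C0 \<ge> 0 \<and>
      (\<forall>q::nat. \<forall>m::nat \<Rightarrow> nat. q \<ge> 2 \<longrightarrow>
         a (\<Sum>i=1..q. m i) \<le> C1 * (\<Sum>i=1..q. a (m i)) + real q * C0))"
  shows "liminf (\<lambda>n. ereal (a n / real n)) = limsup (\<lambda>n. ereal (a n / real n))"
proof -
  define X where "X n = ereal (a n / real n)" for n
  have mult_bound: "limsup X \<le> ereal C1 * liminf X" if "C1 > 1" for C1
  proof -
    obtain C0 where "quasi_subadditive C1 C0 a"
      using assms \<open>C1 > 1\<close> unfolding quasi_subadditive_def by blast
    then show ?thesis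
      unfolding X_def by (rule limsup_le_mult_liminf) (use \<open>C1 > 1\<close> in simp)
  qed
  have "\<forall>\<^sub>F C1 in at_right 1. limsup X \<le> ereal C1 * liminf X"
    using eventually_at_right_less[of "1::real"] by (rule eventually_mono) (rule mult_bound)
  moreover have "((\<lambda>C1. ereal C1 * liminf X) \<longlongrightarrow> ereal 1 * liminf X) (at_right 1)"
    by (intro tendsto_mult_ereal tendsto_ereal tendsto_ident_at tendsto_const) simp
  ultimately have "limsup X \<le> liminf X"
    using tendsto_lowerbound by fastforce
  with Liminf_le_Limsup[of sequentially X] show ?thesis
    unfolding X_def by simp
qed

end
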